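(* Let $U$ be a real separable Hilbert space, $Q\in\mathscr L_1^+(U)$, $(W^Q(t))_{t\in\mathbb{R}}$ a two-sided $Q$-Wiener process, and $\gamma\in(\tfrac12,\tfrac32)$. For $\varepsilon\in(0,\infty)$ let \[ Z^\varepsilon_\gamma(t):=\frac1{\Gamma(\gamma)}\int_{-\infty}^t(t-s)^{\gamma-1}e^{-\varepsilon(t-s)}\,dW^Q(s),\qquad \overline Z^\varepsilon_\gamma(t):=\frac{\Gamma(\gamma)}{C_{\gamma-\frac12}}\bigl(Z^\varepsilon_\gamma(t)-Z^\varepsilon_\gamma(0)\bigr),\qquad t\in\mathbb{R}. \] Then, with $\widehat W^Q_H$ as in the context and $H=\gamma-\frac12$, for every $T\in(0,\infty)$, \[ \lim_{\varepsilon\downarrow0}\sup_{t\in[-T,T]}\bigl\|\widehat W^Q_{\gamma-\frac12}(t)-\overline Z^\varepsilon_\gamma(t)\bigr\|_{L^2(\Omega;U)}=0. \]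
   Context: $\mathscr L_1^+(U)$: self-adjoint trace-class operators $T$ on $U$ with $\langle Tx,x\rangle_U\ge\theta\|x\|^2_U$ for some $\theta>0$. Two-sided $Q$-Wiener process: $W^Q(t)=W^Q_1(t)$ for $t\ge0$, $W^Q(t)=W_2^Q(-t)$ for $t<0$ with $W_1^Q,W_2^Q$ independent standard $Q$-Wiener processes; for deterministic integrands $\Phi$ with $\Phi Q^{1/2}\in L^2(\mathbb{R};\mathscr L_2(U))$ the stochastic integral over $\mathbb{R}$ is defined and satisfies the Itô isometry $\mathbb{E}\|\int_\mathbb{R}\Phi\,dW^Q\|_U^2=\int_\mathbb{R}\|\Phi(t)Q^{1/2}\|^2_{\mathscr L_2(U)}dt$; $\int_a^b:=\int_{\mathbb{R}}\mathbf 1_{(a,b]}\cdots$. For $H\in(0,1)$, $C_H:=\int_\mathbb{R}\bigl|(1-r)_+^{H-\frac12}-(-r)_+^{H-\frac12}\bigr|^2dr$ (with $x_+^{a}:=x^{a}$ for $x>0$ and $0$ otherwise), $K_H(t,r):=\bigl((t-r)_+^{H-\frac12}-(-r)_+^{H-\frac12}\bigr)/C_H$, and $\widehat W^Q_H(t):=\int_\mathbb{R}K_H(t,r)\,dW^Q(r)$, $t\in\mathbb{R}$. *)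

theory Defs
  imports "HOL-Probability.Probability"
begin

definition pospow :: "real \<Rightarrow> real \<Rightarrow> real" where
  "pospow x a = (if x > 0 then x powr a else 0)"

definition onb :: "'u::real_inner set \<Rightarrow> bool" where
  "onb B \<longleftrightarrow> (\<forall>e\<in>B. norm e = 1) \<and> (\<forall>e\<in>B. \<forall>e'\<in>B. e \<noteq> e' \<longrightarrow> inner e e' = 0)
      \<and> closure (span B) = UNIV"

definition L1_plus :: "('u::{real_inner,complete_space} \<Rightarrow> 'u) \<Rightarrow> bool" where
  "L1_plus Q \<longleftrightarrow> bounded_linear Q \<and> (\<forall>x y. inner (Q x) y = inner x (Q y))
     \<and> (\<exists>\<theta>>0. \<forall>x. inner (Q x) x \<ge> \<theta> * (norm x)\<^sup>2)
     \<and> (\<exists>B. onb B \<and> (\<lambda>e. inner (Q e) e) summable_on B)"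

definition trace_op :: "('u::{real_inner,complete_space} \<Rightarrow> 'u) \<Rightarrow> real" where
  "trace_op Q = infsum (\<lambda>e. inner (Q e) e) (SOME B. onb B \<and> (\<lambda>e. inner (Q e) e) summable_on B)"

definition L2_real :: "(real \<Rightarrow> real) \<Rightarrow> bool" where
  "L2_real f \<longleftrightarrow> f \<in> borel_measurable lborel \<and> integrable lborel (\<lambda>r. (f r)\<^sup>2)"

text \<open>Stochastic integral over R w.r.t. a two-sided Q-Wiener process W, for deterministic
  integrands of the form Phi(r) = f(r) Id_U with f in L^2(R): SI f = \<integral>_R f dW^Q.
  Required properties: measurability, linearity, the Ito isometry (note that
  ||f(r) Id Q^(1/2)||_HS^2 = f(r)^2 tr Q), and consistency with W
  (\<integral>_R 1_(0,t] dW = W(t) for t \<ge> 0, \<integral>_R 1_(t,0] dW = W(0) - W(t) = -W(t) for t < 0).\<close>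
definition QWiener_integral ::
  "'w measure \<Rightarrow> ('u::{real_inner,complete_space,second_countable_topology} \<Rightarrow> 'u)
     \<Rightarrow> (real \<Rightarrow> 'w \<Rightarrow> 'u) \<Rightarrow> ((real \<Rightarrow> real) \<Rightarrow> 'w \<Rightarrow> 'u) \<Rightarrow> bool" where
  "QWiener_integral M Q W SI \<longleftrightarrow>
     (\<forall>f. L2_real f \<longrightarrow> SI f \<in> borel_measurable M
          \<and> integrable M (\<lambda>\<omega>. (norm (SI f \<omega>))\<^sup>2)
          \<and> (\<integral>\<omega>. (norm (SI f \<omega>))\<^sup>2 \<partial>M) = trace_op Q * (\<integral>r. (f r)\<^sup>2 \<partial>lborel))
   \<and> (\<forall>f g a b. L2_real f \<longrightarrow> L2_real g \<longrightarrow>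
          (AE \<omega> in M. SI (\<lambda>r. a * f r + b * g r) \<omega> = a *\<^sub>R SI f \<omega> + b *\<^sub>R SI g \<omega>))
   \<and> (\<forall>t\<ge>0. AE \<omega> in M. W t \<omega> = SI (indicator {0<..t}) \<omega>)
   \<and> (\<forall>t<0. AE \<omega> in M. W t \<omega> = - SI (indicator {t<..0}) \<omega>)"

definition C_H :: "real \<Rightarrow> real" where
  "C_H H = (\<integral>r. \<bar>pospow (1 - r) (H - 1/2) - pospow (- r) (H - 1/2)\<bar>\<^sup>2 \<partial>lborel)"

definition K_H :: "real \<Rightarrow> real \<Rightarrow> real \<Rightarrow> real" where
  "K_H H t r = (pospow (t - r) (H - 1/2) - pospow (- r) (H - 1/2)) / C_H H"

definition What :: "((real \<Rightarrow> real) \<Rightarrow> 'w \<Rightarrow> 'u) \<Rightarrow> real \<Rightarrow> real \<Rightarrow> 'w \<Rightarrow> 'u" where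
  "What SI H t = SI (K_H H t)"

definition Zeps :: "((real \<Rightarrow> real) \<Rightarrow> 'w \<Rightarrow> 'u::real_vector) \<Rightarrow> real \<Rightarrow> real \<Rightarrow> real \<Rightarrow> 'w \<Rightarrow> 'u" where
  "Zeps SI \<gamma> \<epsilon> t = (\<lambda>\<omega>. (1 / Gamma \<gamma>) *\<^sub>R
      SI (\<lambda>s. pospow (t - s) (\<gamma> - 1) * exp (- \<epsilon> * (t - s))) \<omega>)"

definition Zbar :: "((real \<Rightarrow> real) \<Rightarrow> 'w \<Rightarrow> 'u::real_vector) \<Rightarrow> real \<Rightarrow> real \<Rightarrow> real \<Rightarrow> 'w \<Rightarrow> 'u" where
  "Zbar SI \<gamma> \<epsilon> t = (\<lambda>\<omega>. (Gamma \<gamma> / C_H (\<gamma> - 1/2)) *\<^sub>R (Zeps SI \<gamma> \<epsilon> t \<omega> - Zeps SI \<gamma> \<epsilon> 0 \<omega>))"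

definition L2norm :: "'w measure \<Rightarrow> ('w \<Rightarrow> 'u::real_normed_vector) \<Rightarrow> real" where
  "L2norm M X = sqrt (\<integral>\<omega>. (norm (X \<omega>))\<^sup>2 \<partial>M)"

end

theory Submission
  imports Defs
begin

(*
  Write a = gamma - 1, so that -1/2 < a < 1/2, and C = C_(gamma - 1/2). The factor Gamma(gamma)
  cancels, and What(t) - Zbar^eps(t) is the stochastic integral of r |-> (phi(t - r) - phi(-r)) / C,
  where phi(y) = y_+^a (1 - exp(-eps y)) is the defect of the exponential tempering. By the Ito
  isometry its squared L^2 norm is tr Q / C^2 times the squared L^2(R) norm of this increment.
  On a bounded window the increment is O(eps), because 1 - exp(-eps y) <= eps y. Far out, the mean
  value theorem bounds it, independently of eps, by a multiple of T x^(a-1), which is square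
  integrable at infinity since a < 1/2. Choosing the window large and then eps small makes the
  integral small uniformly in |t| <= T.
*)

lemma lborel_integral_indicator_has_integral:
  fixes f :: "real \<Rightarrow> real"
  assumes I: "(f has_integral I) A" and [measurable]: "A \<in> sets borel" "f \<in> borel_measurable borel"
    and nonneg: "\<And>x. x \<in> A \<Longrightarrow> 0 \<le> f x"
  shows "integrable lborel (\<lambda>x. indicator A x * f x)"
    and "(\<integral>x. indicator A x * f x \<partial>lborel) = I"
proof -
  let ?g = "\<lambda>x. indicator A x * f x"
  have g_nonneg: "0 \<le> ?g x" for x
    using nonneg by (simp add: indicator_def)
  have "?g = (\<lambda>x. if x \<in> A then f x else 0)"
    by (auto simp: indicator_def)
  with I have "(?g has_integral I) UNIV"
    by (simp add: has_integral_restrict_UNIV)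
  then have nn: "(\<integral>\<^sup>+x. ?g x \<partial>lborel) = I" and "0 \<le> I"
    using nn_integral_has_integral_lborel[of ?g] has_integral_nonneg[of ?g] g_nonneg by auto
  show "integrable lborel ?g"
    by (rule integrableI_nonneg) (use g_nonneg nn in auto)
  show "(\<integral>x. ?g x \<partial>lborel) = I"
    using integral_eq_nn_integral[of ?g lborel] g_nonneg nn \<open>0 \<le> I\<close> by simp
qed

lemma measurable_pospow [measurable]:
  assumes [measurable]: "f \<in> borel_measurable M"
  shows "(\<lambda>x. pospow (f x) a) \<in> borel_measurable M"
  unfolding pospow_def by measurable

lemma mult_exp_minus_le_one:
  fixes x :: real
  shows "x * exp (- x) \<le> 1"
proof -
  have "x \<le> exp x"
    using exp_ge_add_one_self[of x] by linarith
  then show ?thesis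
    by (simp add: exp_minus field_simps)
qed

lemma power2_powr:
  fixes z u :: real
  shows "(z powr u)\<^sup>2 = z powr (2 * u)"
  using powr_power[of z u 2] by (cases "z = 0") simp_all

lemma L2_real_lincomb:
  assumes f: "L2_real f" and g: "L2_real g"
  shows "L2_real (\<lambda>r. c * f r + d * g r)"
proof -
  have [measurable]: "f \<in> borel_measurable lborel" "g \<in> borel_measurable lborel"
    using f g by (auto simp: L2_real_def)
  have bound: "integrable lborel (\<lambda>r. 2 * c\<^sup>2 * (f r)\<^sup>2 + 2 * d\<^sup>2 * (g r)\<^sup>2)"
    using f g by (auto simp: L2_real_def)
  have le: "(c * f r + d * g r)\<^sup>2 \<le> 2 * c\<^sup>2 * (f r)\<^sup>2 + 2 * d\<^sup>2 * (g r)\<^sup>2" for r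
    using zero_le_power2[of "c * f r - d * g r"] by (simp add: power2_eq_square algebra_simps)
  have "integrable lborel (\<lambda>r. (c * f r + d * g r)\<^sup>2)"
    by (rule Bochner_Integration.integrable_bound[OF bound])
       (use le in \<open>auto intro!: AE_I2 simp: abs_of_nonneg\<close>)
  then show ?thesis
    by (simp add: L2_real_def)
qed

lemma L2_real_dominated:
  assumes [measurable]: "f \<in> borel_measurable lborel" and B: "integrable lborel B"
    and le: "\<And>r. (f r)\<^sup>2 \<le> B r"
  shows "L2_real f"
proof -
  have "integrable lborel (\<lambda>r. (f r)\<^sup>2)"
    by (rule Bochner_Integration.integrable_bound[OF B])
       (use le in \<open>auto intro!: AE_I2 intro: order_trans[OF _ abs_ge_self]\<close>)
  then show ?thesis
    by (simp add: L2_real_def)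
qed

lemma L2_real_reflect:
  assumes "L2_real f"
  shows "L2_real (\<lambda>s. f (t - s))"
proof -
  have [measurable]: "f \<in> borel_measurable borel"
    using assms by (simp add: L2_real_def)
  have "integrable lborel (\<lambda>s. (f (t + (-1) * s))\<^sup>2)"
    using assms lborel_integrable_real_affine_iff[of "-1" "\<lambda>s. (f s)\<^sup>2" t] by (simp add: L2_real_def)
  then show ?thesis
    by (simp add: L2_real_def)
qed

lemma tempered_pospow_sq_le:
  fixes a \<epsilon> y :: real
  assumes a: "a < 1/2" and \<epsilon>: "0 < \<epsilon>"
  shows "(pospow y a * exp (- \<epsilon> * y))\<^sup>2
    \<le> indicator {0..1} y * y powr (2*a) + (1/\<epsilon>) * (indicator {1..} y * exp (- \<epsilon> * y))"
proof -
  have nonneg: "0 \<le> indicator {0..1} y * y powr (2*a)" "0 \<le> (1/\<epsilon>) * (indicator {1..} y * exp (- \<epsilon> * y))"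
    using \<epsilon> by auto
  have sq: "(pospow y a * exp (- \<epsilon> * y))\<^sup>2 = y powr (2*a) * (exp (- \<epsilon> * y) * exp (- \<epsilon> * y))"
    if "0 < y"
    using that by (simp add: pospow_def power_mult_distrib power2_powr flip: power2_eq_square)
  consider "y \<le> 0" | "0 < y" "y \<le> 1" | "1 < y"
    by linarith
  then show ?thesis
  proof cases
    case 1
    then show ?thesis
      using nonneg by (simp add: pospow_def)
  next
    case 2
    have "y powr (2*a) * (exp (- \<epsilon> * y) * exp (- \<epsilon> * y)) \<le> y powr (2*a) * 1"
      using 2 \<epsilon> by (intro mult_left_mono) (auto simp: mult_le_one)
    moreover have "indicator {0..1} y * y powr (2*a) = y powr (2*a)"
      using 2 by simp
    ultimately show ?thesis
      using sq[OF \<open>0 < y\<close>] nonneg(2) by linarith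
  next
    case 3
    have "y powr (2*a) * (exp (- \<epsilon> * y) * exp (- \<epsilon> * y)) \<le> y * (exp (- \<epsilon> * y) * exp (- \<epsilon> * y))"
      using 3 a by (intro mult_right_mono) (auto intro: order_trans[OF powr_mono[of "2*a" 1 y]])
    also have "\<dots> = (1/\<epsilon>) * ((\<epsilon> * y) * exp (- \<epsilon> * y)) * exp (- \<epsilon> * y)"
      using \<epsilon> by simp
    also have "\<dots> \<le> (1/\<epsilon>) * 1 * exp (- \<epsilon> * y)"
      using \<epsilon> mult_exp_minus_le_one[of "\<epsilon> * y"] by (intro mult_right_mono mult_left_mono) auto
    finally show ?thesis
      using 3 sq nonneg by simp
  qed
qed

lemma L2_real_tempered_pospow:
  assumes a: "-1/2 < a" "a < 1/2" and \<epsilon>: "0 < \<epsilon>"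
  shows "L2_real (\<lambda>s. pospow (t - s) a * exp (- \<epsilon> * (t - s)))"
proof -
  have "integrable lborel (\<lambda>y. indicator {0..1} y * y powr (2*a))"
    using lborel_integral_indicator_has_integral(1)[OF has_integral_powr_from_0[of "2*a" 1]] a
    by auto
  moreover have "integrable lborel (\<lambda>y. indicator {1..} y * exp (- \<epsilon> * y))"
    using lborel_integral_indicator_has_integral(1)[OF has_integral_exp_minus_to_infinity[OF \<epsilon>]]
    by auto
  ultimately have bound: "integrable lborel
      (\<lambda>y. indicator {0..1} y * y powr (2*a) + (1/\<epsilon>) * (indicator {1..} y * exp (- \<epsilon> * y)))"
    by (intro Bochner_Integration.integrable_add integrable_mult_right)
  have "L2_real (\<lambda>y. pospow y a * exp (- \<epsilon> * y))"
    by (rule L2_real_dominated[OF _ bound]) (measurable, rule tempered_pospow_sq_le[OF a(2) \<epsilon>])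
  then show ?thesis
    by (rule L2_real_reflect)
qed

definition tempering_defect :: "real \<Rightarrow> real \<Rightarrow> real \<Rightarrow> real" where
  "tempering_defect a \<epsilon> y = pospow y a * (1 - exp (- \<epsilon> * y))"

lemma measurable_tempering_defect [measurable]:
  assumes [measurable]: "f \<in> borel_measurable M"
  shows "(\<lambda>x. tempering_defect a \<epsilon> (f x)) \<in> borel_measurable M"
  unfolding tempering_defect_def by measurable

lemma abs_tempering_defect_le:
  assumes "-1 < a" "0 < \<epsilon>" "y \<le> R"
  shows "\<bar>tempering_defect a \<epsilon> y\<bar> \<le> \<epsilon> * R powr (a+1)"
proof (cases "0 < y")
  case False
  then show ?thesis
    using assms by (simp add: tempering_defect_def pospow_def)
next
  case True
  have "0 \<le> 1 - exp (- \<epsilon> * y)" "1 - exp (- \<epsilon> * y) \<le> \<epsilon> * y"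
    using True assms exp_ge_add_one_self[of "- \<epsilon> * y"] by auto
  then have "\<bar>tempering_defect a \<epsilon> y\<bar> \<le> y powr a * (\<epsilon> * y)"
    using True by (simp add: tempering_defect_def pospow_def mult_left_mono)
  also have "\<dots> = \<epsilon> * y powr (a+1)"
    using True by (simp add: powr_add)
  also have "\<dots> \<le> \<epsilon> * R powr (a+1)"
    using True assms by (intro mult_left_mono powr_mono2) auto
  finally show ?thesis .
qed

lemma abs_tempering_defect_deriv_le:
  fixes a \<epsilon> y :: real
  assumes "0 < y" "0 < \<epsilon>"
  shows "\<bar>a * y powr (a-1) * (1 - exp (- \<epsilon> * y)) + y powr a * (\<epsilon> * exp (- \<epsilon> * y))\<bar>
    \<le> (\<bar>a\<bar> + 1) * y powr (a-1)"
proof -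
  have "0 < \<epsilon> * y"
    using assms by simp
  then have "0 \<le> 1 - exp (- \<epsilon> * y)" "1 - exp (- \<epsilon> * y) \<le> 1"
    by auto
  then have first: "\<bar>a * y powr (a-1) * (1 - exp (- \<epsilon> * y))\<bar> \<le> \<bar>a\<bar> * y powr (a-1)"
    by (simp add: abs_mult mult_left_le)
  have "(\<epsilon> * y) * exp (- \<epsilon> * y) \<le> 1"
    using mult_exp_minus_le_one[of "\<epsilon> * y"] by simp
  moreover have "y powr a = y powr (a-1) * y"
    using assms powr_add[of y "a-1" 1] by simp
  ultimately have "y powr a * (\<epsilon> * exp (- \<epsilon> * y)) \<le> y powr (a-1)"
    using mult_left_le[of "(\<epsilon> * y) * exp (- \<epsilon> * y)" "y powr (a-1)"] by (simp add: algebra_simps)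
  moreover have "0 \<le> y powr a * (\<epsilon> * exp (- \<epsilon> * y))"
    using assms by simp
  ultimately show ?thesis
    using first by (simp add: algebra_simps abs_le_iff)
qed

lemma abs_tempering_defect_diff_le:
  assumes "0 < p" "p \<le> q" "0 < \<epsilon>" "a < 1"
  shows "\<bar>tempering_defect a \<epsilon> q - tempering_defect a \<epsilon> p\<bar>
    \<le> (q - p) * ((\<bar>a\<bar> + 1) * p powr (a-1))"
proof (cases "p = q")
  case False
  with assms have "p < q" by simp
  let ?f = "\<lambda>y. y powr a * (1 - exp (- \<epsilon> * y))"
  let ?f' = "\<lambda>y. a * y powr (a-1) * (1 - exp (- \<epsilon> * y)) + y powr a * (\<epsilon> * exp (- \<epsilon> * y))"
  have "(?f has_real_derivative ?f' y) (at y)" if "0 < y" for y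
    using that by (auto intro!: derivative_eq_intros simp: algebra_simps)
  then obtain z where z: "p < z" "z < q" and mvt: "?f q - ?f p = (q - p) * ?f' z"
    using MVT2[OF \<open>p < q\<close>, of ?f ?f'] assms by force
  have "\<bar>?f' z\<bar> \<le> (\<bar>a\<bar> + 1) * z powr (a-1)"
    using z assms by (intro abs_tempering_defect_deriv_le) auto
  also have "\<dots> \<le> (\<bar>a\<bar> + 1) * p powr (a-1)"
    using z assms by (intro mult_left_mono powr_mono2') auto
  finally have "\<bar>?f q - ?f p\<bar> \<le> (q - p) * ((\<bar>a\<bar> + 1) * p powr (a-1))"
    unfolding mvt abs_mult using \<open>p < q\<close> by (simp add: mult_left_mono)
  then show ?thesis
    using assms by (simp add: tempering_defect_def pospow_def)
qed simp

lemma abs_tempering_defect_increment_le: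
  fixes a \<epsilon> t x :: real
  assumes "a < 1" "0 < \<epsilon>" "0 < x" "2 * \<bar>t\<bar> \<le> x"
  shows "\<bar>tempering_defect a \<epsilon> (t + x) - tempering_defect a \<epsilon> x\<bar>
    \<le> \<bar>t\<bar> * ((\<bar>a\<bar>+1) * (x/2) powr (a-1))"
proof -
  define p where "p = min x (t + x)"
  define q where "q = max x (t + x)"
  have pq: "x/2 \<le> p" "p \<le> q" "q - p = \<bar>t\<bar>" "0 < p"
    using assms by (auto simp: p_def q_def)
  have "\<bar>tempering_defect a \<epsilon> (t + x) - tempering_defect a \<epsilon> x\<bar>
      = \<bar>tempering_defect a \<epsilon> q - tempering_defect a \<epsilon> p\<bar>"
    by (auto simp: p_def q_def min_def max_def abs_minus_commute)
  also have "\<dots> \<le> (q - p) * ((\<bar>a\<bar>+1) * p powr (a-1))"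
    using pq assms by (intro abs_tempering_defect_diff_le) auto
  also have "\<dots> \<le> \<bar>t\<bar> * ((\<bar>a\<bar>+1) * (x/2) powr (a-1))"
    unfolding \<open>q - p = \<bar>t\<bar>\<close> using pq assms by (intro mult_left_mono powr_mono2') auto
  finally show ?thesis .
qed

lemma tempering_defect_increment_sq_le:
  fixes a \<epsilon> t T L x :: real
  assumes a: "-1 < a" "a < 1" and \<epsilon>: "0 < \<epsilon>" and t: "\<bar>t\<bar> \<le> T" and L: "2*T + 1 \<le> L"
  shows "(tempering_defect a \<epsilon> (t + x) - tempering_defect a \<epsilon> x)\<^sup>2
    \<le> indicator {-T..L} x * (4 * \<epsilon>\<^sup>2 * (T+L) powr (2*a+2))
      + indicator {L..} x * ((T * (\<bar>a\<bar>+1))\<^sup>2 * 2 powr (2-2*a) * x powr (2*a-2))"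
    (is "?d\<^sup>2 \<le> ?near + ?far")
proof -
  have "0 \<le> ?near" "0 \<le> ?far"
    by simp_all
  consider "x < -T" | "-T \<le> x" "x \<le> L" | "L < x"
    by linarith
  then show ?thesis
  proof cases
    case 1
    then have "t + x \<le> 0" "x \<le> 0"
      using t by auto
    then show ?thesis
      using \<open>0 \<le> ?near\<close> \<open>0 \<le> ?far\<close> by (simp add: tempering_defect_def pospow_def)
  next
    case 2
    define R where "R = \<epsilon> * (T+L) powr (a+1)"
    have "\<bar>tempering_defect a \<epsilon> (t + x)\<bar> \<le> R" "\<bar>tempering_defect a \<epsilon> x\<bar> \<le> R"
      unfolding R_def using 2 t a \<epsilon> by (auto intro!: abs_tempering_defect_le)
    then have "\<bar>?d\<bar> \<le> 2 * R"
      by linarith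
    then have "?d\<^sup>2 \<le> (2 * R)\<^sup>2"
      by (metis abs_ge_zero power2_abs power_mono)
    also have "(2 * R)\<^sup>2 = 4 * \<epsilon>\<^sup>2 * (T+L) powr (2*a+2)"
      unfolding R_def by (simp add: power_mult_distrib power2_powr algebra_simps)
    finally have "?d\<^sup>2 \<le> ?near"
      using 2 by simp
    with \<open>0 \<le> ?far\<close> show ?thesis
      by linarith
  next
    case 3
    have "\<bar>?d\<bar> \<le> \<bar>t\<bar> * ((\<bar>a\<bar>+1) * (x/2) powr (a-1))"
      using 3 t L a \<epsilon> by (intro abs_tempering_defect_increment_le) auto
    also have "\<dots> \<le> T * ((\<bar>a\<bar>+1) * (x/2) powr (a-1))"
      using t by (intro mult_right_mono) auto
    finally have "?d\<^sup>2 \<le> (T * ((\<bar>a\<bar>+1) * (x/2) powr (a-1)))\<^sup>2"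
      by (metis abs_ge_zero power2_abs power_mono)
    also have "\<dots> = (T * (\<bar>a\<bar>+1))\<^sup>2 * (x/2) powr (2*a-2)"
      unfolding power_mult_distrib power2_powr by (simp add: algebra_simps)
    also have "(x/2) powr (2*a-2) = 2 powr (2-2*a) * x powr (2*a-2)"
      using powr_minus_divide[of 2 "2*a-2"] by (simp add: powr_divide powr_minus_divide)
    finally have "?d\<^sup>2 \<le> ?far"
      using 3 by (simp add: mult.assoc)
    with \<open>0 \<le> ?near\<close> show ?thesis
      by linarith
  qed
qed

lemma tempering_defect_increment_integral_le:
  fixes a \<epsilon> t T L :: real
  assumes a: "-1 < a" "a < 1/2" and \<epsilon>: "0 < \<epsilon>" and t: "\<bar>t\<bar> \<le> T" and L: "2*T + 1 \<le> L"
  shows "integrable lborel (\<lambda>r. (tempering_defect a \<epsilon> (t - r) - tempering_defect a \<epsilon> (- r))\<^sup>2)"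
    and "(\<integral>r. (tempering_defect a \<epsilon> (t - r) - tempering_defect a \<epsilon> (- r))\<^sup>2 \<partial>lborel)
      \<le> 4 * \<epsilon>\<^sup>2 * (T+L) powr (2*a+2) * (L+T)
        + (T * (\<bar>a\<bar>+1))\<^sup>2 * 2 powr (2-2*a) * (L powr (2*a-1) / (1-2*a))"
proof -
  define c where "c = 4 * \<epsilon>\<^sup>2 * (T+L) powr (2*a+2)"
  define K where "K = (T * (\<bar>a\<bar>+1))\<^sup>2 * 2 powr (2-2*a)"
  define B where "B x = indicator {-T..L} x * c + K * (indicator {L..} x * x powr (2*a-2))" for x
  define g where "g r = (tempering_defect a \<epsilon> (t - r) - tempering_defect a \<epsilon> (- r))\<^sup>2" for r
  have "0 < L"
    using t L by linarith
  have tail: "integrable lborel (\<lambda>x. indicator {L..} x * x powr (2*a-2))"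
    "(\<integral>x. indicator {L..} x * x powr (2*a-2) \<partial>lborel) = L powr (2*a-1) / (1-2*a)"
    using lborel_integral_indicator_has_integral[OF has_integral_powr_to_inf[of "2*a-2" L]] \<open>0 < L\<close> a
    by (auto simp: minus_divide_right)
  have near: "integrable lborel (\<lambda>x. indicator {-T..L} x * c)"
    by (intro integrable_mult_left integrable_real_indicator) (auto simp: emeasure_lborel_Icc_eq)
  have B: "integrable lborel B"
    unfolding B_def using near tail(1) by (intro Bochner_Integration.integrable_add integrable_mult_right)
  have B_integral: "integral\<^sup>L lborel B = c * (L+T) + K * (L powr (2*a-1) / (1-2*a))"
    unfolding B_def using near tail t L by simp
  have le: "g (- x) \<le> B x" for x
    unfolding g_def B_def c_def K_def
    using tempering_defect_increment_sq_le[OF _ _ \<epsilon> t L, of a x] a by (simp add: algebra_simps)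
  have g_nonneg: "0 \<le> g x" for x
    unfolding g_def by simp
  have [measurable]: "g \<in> borel_measurable borel"
    unfolding g_def by measurable
  have reflected: "integrable lborel (\<lambda>x. g (- x))"
    by (rule Bochner_Integration.integrable_bound[OF B])
       (use le g_nonneg in \<open>auto intro!: AE_I2 intro: order_trans[OF _ abs_ge_self]\<close>)
  moreover have "(\<integral>x. g (- x) \<partial>lborel) \<le> c * (L+T) + K * (L powr (2*a-1) / (1-2*a))"
    using integral_mono[OF reflected B] le B_integral by simp
  moreover have "integrable lborel (\<lambda>x. g (- x)) \<longleftrightarrow> integrable lborel g"
    "(\<integral>x. g (- x) \<partial>lborel) = integral\<^sup>L lborel g"
    using lborel_integrable_real_affine_iff[of "-1" g 0] lborel_integral_real_affine[of "-1" g 0] by simp_all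
  ultimately show "integrable lborel g"
    and "integral\<^sup>L lborel g \<le> c * (L+T) + K * (L powr (2*a-1) / (1-2*a))"
    by simp_all
qed

lemma uniform_limit_tempering_defect_increment_integral:
  fixes a T :: real
  assumes a: "-1 < a" "a < 1/2"
  shows "uniform_limit {-T..T}
    (\<lambda>\<epsilon> t. \<integral>r. (tempering_defect a \<epsilon> (t - r) - tempering_defect a \<epsilon> (- r))\<^sup>2 \<partial>lborel) (\<lambda>_. 0) (at_right 0)"
proof (rule uniform_limitI)
  fix \<eta> :: real
  assume "0 < \<eta>"
  define K where "K = (T * (\<bar>a\<bar>+1))\<^sup>2 * 2 powr (2-2*a)"
  have "((\<lambda>L. K * (L powr (2*a-1) / (1-2*a))) \<longlongrightarrow> K * (0 / (1-2*a))) at_top"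
    using a by (intro tendsto_intros tendsto_neg_powr filterlim_ident) auto
  then have "\<forall>\<^sub>F L in at_top. K * (L powr (2*a-1) / (1-2*a)) < \<eta>/2 \<and> 2*T + 1 \<le> L"
    using \<open>0 < \<eta>\<close> by (intro eventually_conj order_tendstoD(2) eventually_ge_at_top) auto
  then obtain L where tail: "K * (L powr (2*a-1) / (1-2*a)) < \<eta>/2" and L: "2*T + 1 \<le> L"
    by (auto simp: eventually_at_top_linorder)
  have "((\<lambda>\<epsilon>. 4 * \<epsilon>\<^sup>2 * (T+L) powr (2*a+2) * (L+T))
      \<longlongrightarrow> 4 * 0\<^sup>2 * (T+L) powr (2*a+2) * (L+T)) (at_right 0)"
    by (intro tendsto_intros)
  then have "\<forall>\<^sub>F \<epsilon> in at_right 0. 4 * \<epsilon>\<^sup>2 * (T+L) powr (2*a+2) * (L+T) < \<eta>/2 \<and> 0 < \<epsilon>"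
    using \<open>0 < \<eta>\<close> by (intro eventually_conj order_tendstoD(2)) (auto simp: eventually_at_right_less)
  then show "\<forall>\<^sub>F \<epsilon> in at_right 0. \<forall>t\<in>{-T..T}.
    dist (\<integral>r. (tempering_defect a \<epsilon> (t - r) - tempering_defect a \<epsilon> (- r))\<^sup>2 \<partial>lborel) 0 < \<eta>"
  proof eventually_elim
    case (elim \<epsilon>)
    show ?case
    proof
      fix t :: real
      assume "t \<in> {-T..T}"
      then have "\<bar>t\<bar> \<le> T"
        by auto
      let ?E = "\<integral>r. (tempering_defect a \<epsilon> (t - r) - tempering_defect a \<epsilon> (- r))\<^sup>2 \<partial>lborel"
      have "?E \<le> 4 * \<epsilon>\<^sup>2 * (T+L) powr (2*a+2) * (L+T) + K * (L powr (2*a-1) / (1-2*a))"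
        unfolding K_def using elim \<open>\<bar>t\<bar> \<le> T\<close> L by (intro tempering_defect_increment_integral_le(2) a) auto
      with elim tail have "?E < \<eta>"
        by linarith
      moreover have "0 \<le> ?E"
        by (simp add: integral_nonneg)
      ultimately show "dist ?E 0 < \<eta>"
        by simp
    qed
  qed
qed

lemma L2_real_tempering_defect_increment:
  assumes "-1 < a" "a < 1/2" "0 < \<epsilon>"
  shows "L2_real (\<lambda>r. tempering_defect a \<epsilon> (t - r) - tempering_defect a \<epsilon> (- r))"
  using tempering_defect_increment_integral_le(1)[OF assms, of t "\<bar>t\<bar>" "2 * \<bar>t\<bar> + 1"]
  by (simp add: L2_real_def)

lemma L2_real_K_H:
  assumes "1/2 < \<gamma>" "\<gamma> < 3/2"
  shows "L2_real (K_H (\<gamma> - 1/2) t)"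
proof -
  \<comment> \<open>Neither y_+^a term of K_H is square integrable on its own; subtracting the tempered kernels
    (with eps = 1) leaves a tempering-defect increment, which is.\<close>
  define a where "a = \<gamma> - 1"
  define c where "c = 1 / C_H (\<gamma> - 1/2)"
  define \<delta> where "\<delta> = (\<lambda>r. tempering_defect a 1 (t - r) - tempering_defect a 1 (- r))"
  define \<psi> where "\<psi> s = (\<lambda>r. pospow (s - r) a * exp (- 1 * (s - r)))" for s
  have a: "-1/2 < a" "a < 1/2"
    using assms by (auto simp: a_def)
  have "L2_real \<delta>"
    unfolding \<delta>_def using a by (intro L2_real_tempering_defect_increment) auto
  moreover have "L2_real (\<psi> s)" for s
    unfolding \<psi>_def using a by (intro L2_real_tempered_pospow) auto
  then have "L2_real (\<lambda>r. 1 * \<psi> t r + (-1) * \<psi> 0 r)"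
    by (intro L2_real_lincomb)
  ultimately have "L2_real (\<lambda>r. c * \<delta> r + c * (1 * \<psi> t r + (-1) * \<psi> 0 r))"
    by (rule L2_real_lincomb)
  also have "(\<lambda>r. c * \<delta> r + c * (1 * \<psi> t r + (-1) * \<psi> 0 r)) = K_H (\<gamma> - 1/2) t"
    by (auto simp: K_H_def tempering_defect_def \<delta>_def \<psi>_def c_def a_def algebra_simps diff_divide_distrib)
  finally show ?thesis .
qed

lemma uniform_limit_sqrt_zero:
  fixes f :: "'a \<Rightarrow> 'b \<Rightarrow> real"
  assumes "uniform_limit S f (\<lambda>_. 0) F"
  shows "uniform_limit S (\<lambda>x t. sqrt (f x t)) (\<lambda>_. 0) F"
proof (rule uniform_limitI)
  fix \<eta> :: real
  assume "0 < \<eta>"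
  then have "0 < \<eta>\<^sup>2"
    by simp
  then have "\<forall>\<^sub>F x in F. \<forall>t\<in>S. \<bar>f x t\<bar> < \<eta>\<^sup>2"
    using uniform_limitD[OF assms] by simp
  then show "\<forall>\<^sub>F x in F. \<forall>t\<in>S. dist (sqrt (f x t)) 0 < \<eta>"
  proof eventually_elim
    case (elim x)
    show ?case
    proof
      fix t
      assume "t \<in> S"
      then have "sqrt \<bar>f x t\<bar> < sqrt (\<eta>\<^sup>2)"
        using elim by (simp only: real_sqrt_less_iff)
      then show "dist (sqrt (f x t)) 0 < \<eta>"
        using \<open>0 < \<eta>\<close> by (simp add: real_sqrt_abs' dist_real_def)
    qed
  qed
qed

lemma uniform_limit_zero_imp_tendsto_SUP:
  fixes f :: "'a \<Rightarrow> 'b \<Rightarrow> real"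
  assumes "uniform_limit S f (\<lambda>_. 0) F" and "S \<noteq> {}"
  shows "((\<lambda>x. SUP t\<in>S. f x t) \<longlongrightarrow> 0) F"
proof (rule tendstoI)
  fix \<eta> :: real
  assume "0 < \<eta>"
  then have "\<forall>\<^sub>F x in F. \<forall>t\<in>S. \<bar>f x t\<bar> < \<eta>/2"
    using uniform_limitD[OF assms(1), of "\<eta>/2"] by simp
  then show "\<forall>\<^sub>F x in F. dist (SUP t\<in>S. f x t) 0 < \<eta>"
  proof eventually_elim
    case (elim x)
    obtain t0 where "t0 \<in> S"
      using assms(2) by blast
    have "bdd_above (f x ` S)"
      using elim by (intro bdd_aboveI2[of _ _ "\<eta>/2"]) force
    then have "f x t0 \<le> (SUP t\<in>S. f x t)"
      using \<open>t0 \<in> S\<close> by (rule cSUP_upper2) simp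
    moreover have "(SUP t\<in>S. f x t) \<le> \<eta>/2"
      using elim assms(2) by (intro cSUP_least) force+
    ultimately show ?case
      using elim \<open>t0 \<in> S\<close> \<open>0 < \<eta>\<close> by (force simp: dist_real_def)
  qed
qed

lemma QWiener_integral_measurable:
  "QWiener_integral M Q W SI \<Longrightarrow> L2_real f \<Longrightarrow> SI f \<in> borel_measurable M"
  by (simp add: QWiener_integral_def)

lemma QWiener_integral_lincomb_AE:
  "QWiener_integral M Q W SI \<Longrightarrow> L2_real f \<Longrightarrow> L2_real g \<Longrightarrow>
    AE \<omega> in M. SI (\<lambda>r. c * f r + d * g r) \<omega> = c *\<^sub>R SI f \<omega> + d *\<^sub>R SI g \<omega>"
  by (simp add: QWiener_integral_def)

lemma L2norm_QWiener_integral: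
  "QWiener_integral M Q W SI \<Longrightarrow> L2_real f \<Longrightarrow>
    L2norm M (SI f) = sqrt (trace_op Q * (\<integral>r. (f r)\<^sup>2 \<partial>lborel))"
  by (simp add: QWiener_integral_def L2norm_def)

lemma L2norm_cong_AE:
  assumes "X \<in> borel_measurable M" "Y \<in> borel_measurable M" "AE \<omega> in M. X \<omega> = Y \<omega>"
  shows "L2norm M X = L2norm M Y"
proof -
  have [measurable]: "X \<in> borel_measurable M" "Y \<in> borel_measurable M"
    using assms(1,2) .
  have "AE \<omega> in M. (norm (X \<omega>))\<^sup>2 = (norm (Y \<omega>))\<^sup>2"
    using assms(3) by eventually_elim simp
  then have "(\<integral>\<omega>. (norm (X \<omega>))\<^sup>2 \<partial>M) = (\<integral>\<omega>. (norm (Y \<omega>))\<^sup>2 \<partial>M)"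
    by (intro integral_cong_AE) measurable
  then show ?thesis
    by (simp add: L2norm_def)
qed

lemma L2norm_QWiener_integral_combination:
  assumes SI: "QWiener_integral M Q W SI" and L2: "L2_real f" "L2_real g" "L2_real h"
  shows "L2norm M (\<lambda>\<omega>. SI f \<omega> - c *\<^sub>R (SI g \<omega> - SI h \<omega>))
    = sqrt (trace_op Q * (\<integral>r. (f r - c * (g r - h r))\<^sup>2 \<partial>lborel))"
proof -
  define \<Delta> where "\<Delta> = (\<lambda>r. 1 * g r + (-1) * h r)"
  define D where "D = (\<lambda>r. 1 * f r + (- c) * \<Delta> r)"
  have "L2_real \<Delta>"
    unfolding \<Delta>_def using L2(2,3) by (rule L2_real_lincomb)
  with L2(1) have "L2_real D"
    unfolding D_def by (rule L2_real_lincomb)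
  have [measurable]: "SI f \<in> borel_measurable M" "SI g \<in> borel_measurable M"
    "SI h \<in> borel_measurable M" "SI D \<in> borel_measurable M"
    using L2 \<open>L2_real D\<close> by (auto intro: QWiener_integral_measurable[OF SI])
  have "AE \<omega> in M. SI \<Delta> \<omega> = 1 *\<^sub>R SI g \<omega> + (-1) *\<^sub>R SI h \<omega>"
    unfolding \<Delta>_def using SI L2(2,3) by (rule QWiener_integral_lincomb_AE)
  moreover have "AE \<omega> in M. SI D \<omega> = 1 *\<^sub>R SI f \<omega> + (- c) *\<^sub>R SI \<Delta> \<omega>"
    unfolding D_def using SI L2(1) \<open>L2_real \<Delta>\<close> by (rule QWiener_integral_lincomb_AE)
  ultimately have "AE \<omega> in M. SI f \<omega> - c *\<^sub>R (SI g \<omega> - SI h \<omega>) = SI D \<omega>"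
    by eventually_elim simp
  then have "L2norm M (\<lambda>\<omega>. SI f \<omega> - c *\<^sub>R (SI g \<omega> - SI h \<omega>)) = L2norm M (SI D)"
    by (intro L2norm_cong_AE) auto
  also have "\<dots> = sqrt (trace_op Q * (\<integral>r. (D r)\<^sup>2 \<partial>lborel))"
    using SI \<open>L2_real D\<close> by (rule L2norm_QWiener_integral)
  finally show ?thesis
    by (simp add: D_def \<Delta>_def algebra_simps)
qed

lemma L2norm_What_minus_Zbar:
  assumes SI: "QWiener_integral M Q W SI" and \<gamma>: "1/2 < \<gamma>" "\<gamma> < 3/2" and \<epsilon>: "0 < \<epsilon>"
  shows "L2norm M (\<lambda>\<omega>. What SI (\<gamma> - 1/2) t \<omega> - Zbar SI \<gamma> \<epsilon> t \<omega>)
    = sqrt (trace_op Q / (C_H (\<gamma> - 1/2))\<^sup>2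
        * (\<integral>r. (tempering_defect (\<gamma> - 1) \<epsilon> (t - r) - tempering_defect (\<gamma> - 1) \<epsilon> (- r))\<^sup>2 \<partial>lborel))"
proof -
  define c where "c = 1 / C_H (\<gamma> - 1/2)"
  define K where "K = K_H (\<gamma> - 1/2) t"
  define \<psi> where "\<psi> s = (\<lambda>r. pospow (s - r) (\<gamma> - 1) * exp (- \<epsilon> * (s - r)))" for s
  have "0 < Gamma \<gamma>"
    using \<gamma> by (intro Gamma_real_pos) simp
  then have diff: "(\<lambda>\<omega>. What SI (\<gamma> - 1/2) t \<omega> - Zbar SI \<gamma> \<epsilon> t \<omega>)
    = (\<lambda>\<omega>. SI K \<omega> - c *\<^sub>R (SI (\<psi> t) \<omega> - SI (\<psi> 0) \<omega>))"
    by (simp add: What_def Zbar_def Zeps_def K_def \<psi>_def c_def scaleR_diff_right)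
  have "L2norm M (\<lambda>\<omega>. What SI (\<gamma> - 1/2) t \<omega> - Zbar SI \<gamma> \<epsilon> t \<omega>)
    = sqrt (trace_op Q * (\<integral>r. (K r - c * (\<psi> t r - \<psi> 0 r))\<^sup>2 \<partial>lborel))"
    unfolding diff K_def \<psi>_def using \<gamma>
    by (intro L2norm_QWiener_integral_combination[OF SI] L2_real_K_H L2_real_tempered_pospow \<epsilon>) simp_all
  also have "(\<lambda>r. K r - c * (\<psi> t r - \<psi> 0 r))
    = (\<lambda>r. c * (tempering_defect (\<gamma> - 1) \<epsilon> (t - r) - tempering_defect (\<gamma> - 1) \<epsilon> (- r)))"
  proof -
    have "\<gamma> - 1/2 - 1/2 = \<gamma> - 1"
      by simp
    then show ?thesis
      by (simp add: K_def \<psi>_def c_def K_H_def tempering_defect_def algebra_simps diff_divide_distrib)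
  qed
  finally show ?thesis
    by (simp add: c_def power_mult_distrib power_divide)
qed

theorem proposition5p3:
  fixes M :: "'w measure"
    and Q :: "'u::{real_inner,complete_space,second_countable_topology} \<Rightarrow> 'u"
    and W :: "real \<Rightarrow> 'w \<Rightarrow> 'u"
    and SI :: "(real \<Rightarrow> real) \<Rightarrow> 'w \<Rightarrow> 'u"
    and \<gamma> T :: real
  assumes "prob_space M"
    and "L1_plus Q"
    and "QWiener_integral M Q W SI"
    and "1/2 < \<gamma>" and "\<gamma> < 3/2"
    and "0 < T"
  shows "((\<lambda>\<epsilon>. SUP t\<in>{-T..T}. L2norm M (\<lambda>\<omega>. What SI (\<gamma> - 1/2) t \<omega> - Zbar SI \<gamma> \<epsilon> t \<omega>))
            \<longlongrightarrow> 0) (at_right 0)"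
proof -
  \<comment> \<open>Only the isometry and the linearity of SI enter.\<close>
  define E where "E \<epsilon> t =
    (\<integral>r. (tempering_defect (\<gamma> - 1) \<epsilon> (t - r) - tempering_defect (\<gamma> - 1) \<epsilon> (- r))\<^sup>2 \<partial>lborel)" for \<epsilon> t
  define \<kappa> where "\<kappa> = trace_op Q / (C_H (\<gamma> - 1/2))\<^sup>2"
  have "uniform_limit {-T..T} E (\<lambda>_. 0) (at_right 0)"
    unfolding E_def using assms(4,5) by (intro uniform_limit_tempering_defect_increment_integral) auto
  then have "uniform_limit {-T..T} (\<lambda>\<epsilon> t. \<kappa> * E \<epsilon> t) (\<lambda>_. \<kappa> * 0) (at_right 0)"
    by (intro uniform_limit_intros)
  then have "uniform_limit {-T..T} (\<lambda>\<epsilon> t. sqrt (\<kappa> * E \<epsilon> t)) (\<lambda>_. 0) (at_right 0)"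
    by (intro uniform_limit_sqrt_zero) simp
  moreover have "\<forall>\<^sub>F \<epsilon> in at_right 0. \<forall>t\<in>{-T..T}.
      sqrt (\<kappa> * E \<epsilon> t) = L2norm M (\<lambda>\<omega>. What SI (\<gamma> - 1/2) t \<omega> - Zbar SI \<gamma> \<epsilon> t \<omega>)"
    using eventually_at_right_less[of 0]
    by eventually_elim (use assms(3-5) in \<open>simp add: E_def \<kappa>_def L2norm_What_minus_Zbar\<close>)
  ultimately have "uniform_limit {-T..T}
      (\<lambda>\<epsilon> t. L2norm M (\<lambda>\<omega>. What SI (\<gamma> - 1/2) t \<omega> - Zbar SI \<gamma> \<epsilon> t \<omega>)) (\<lambda>_. 0) (at_right 0)"
    by (simp cong: uniform_limit_cong)
  then show ?thesis
    using assms(6) by (intro uniform_limit_zero_imp_tendsto_SUP) auto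
qed

end
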